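(* Consider the private counterfactual retrieval problem described in the context, with $N=2$ servers, database size $M$, dimension $d$, attribute bound $R$, and let $q>R^2 d$ be a prime. Then there exists a scheme over $\mathbb{F}_q$ that satisfies decodability (the user recovers exactly the index $\theta^*=\arg\min_{i\in[M]}\|x-y_i\|^2$ of the closest accepted sample) and perfect user privacy, and whose communication cost is $2(d+M)$ symbols of $\mathbb{F}_q$.
   Context: Setting (private counterfactual retrieval, PCR). A database $\mathcal{D}=\{y_1,\dots,y_M\}$ of accepted samples, each $y_i\in[0:R]^d$ (integer attributes between $0$ and $R$), is stored in replicated form on $N$ non-colluding, non-communicating servers. A user holds a (rejected) sample $x\in[0:R]^d$. All integers are viewed as elements of the prime field $\mathbb{F}_q$. The goal is for the user to learn $\theta^*=\arg\min_{i\in[M]}\|x-y_i\|^2$ (squared Euclidean distance computed over the integers). A scheme works as follows: the user, using $x$ and private randomness, sends a query $Q_n$ (a tuple of elements of $\mathbb{F}_q$) to server $n\in[N]$; the servers share common randomness $Z'$ unknown to the user; server $n$ returns an answer $A_n$ that is a deterministic function of $(\mathcal{D},Q_n,Z')$, i.e. $H(A_n\mid \mathcal{D},Q_n,Z')=0$. Decodability: $H(\theta^*\mid Q_{[N]},A_{[N]},x)=0$. Perfect user privacy: for every $n\in[N]$, $I(x,\theta^*;Q_n,A_n\mid \mathcal{D})=0$. The communication cost is the total number of $\mathbb{F}_q$ symbols uploaded in all queries plus downloaded in all answers. *)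

theory Defs
  imports "HOL-Probability.Probability_Mass_Function"
begin

text \<open>Vectors in [0:R]^d are nat lists of length d with entries at most R.
  Elements of F_q are represented by their canonical representatives 0..q-1.\<close>

definition valid_vec :: "nat \<Rightarrow> nat \<Rightarrow> nat list \<Rightarrow> bool" where
  "valid_vec R d v \<longleftrightarrow> length v = d \<and> (\<forall>a\<in>set v. a \<le> R)"

definition valid_db :: "nat \<Rightarrow> nat \<Rightarrow> nat \<Rightarrow> nat list list \<Rightarrow> bool" where
  "valid_db M d R DB \<longleftrightarrow> length DB = M \<and> (\<forall>y\<in>set DB. valid_vec R d y)"

definition field_symbols :: "nat \<Rightarrow> nat list \<Rightarrow> bool" where
  "field_symbols q s \<longleftrightarrow> (\<forall>a\<in>set s. a < q)"

definition sqdist :: "nat list \<Rightarrow> nat list \<Rightarrow> int" where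
  "sqdist x y = (\<Sum>j<length x. (int (x ! j) - int (y ! j))^2)"

text \<open>theta* = argmin_i ||x - y_i||^2 (0-based indices; ties broken towards the least index).\<close>
definition closest :: "nat list \<Rightarrow> nat list list \<Rightarrow> nat" where
  "closest x DB = (LEAST i. i < length DB \<and>
      (\<forall>k<length DB. sqdist x (DB ! i) \<le> sqdist x (DB ! k)))"

text \<open>PU: user's private randomness; PZ: servers' common randomness (independent of PU).
  Q n x u: query to server n \<in> {1,2}; A n DB qry z: answer of server n (deterministic in DB, qry, z);
  dec: the user's decoder, a function of x, all queries and all answers.\<close>
definition PCR2_scheme ::
  "nat \<Rightarrow> nat \<Rightarrow> nat \<Rightarrow> nat \<Rightarrow> nat list pmf \<Rightarrow> nat list pmf
   \<Rightarrow> (nat \<Rightarrow> nat list \<Rightarrow> nat list \<Rightarrow> nat list)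
   \<Rightarrow> (nat \<Rightarrow> nat list list \<Rightarrow> nat list \<Rightarrow> nat list \<Rightarrow> nat list)
   \<Rightarrow> (nat list \<Rightarrow> nat list \<Rightarrow> nat list \<Rightarrow> nat list \<Rightarrow> nat list \<Rightarrow> nat) \<Rightarrow> bool" where
  "PCR2_scheme q M d R PU PZ Q A dec \<longleftrightarrow>
     \<comment> \<open>all uploaded / downloaded symbols are elements of F_q\<close>
     (\<forall>DB x u z n. valid_db M d R DB \<longrightarrow> valid_vec R d x \<longrightarrow> u \<in> set_pmf PU \<longrightarrow>
        z \<in> set_pmf PZ \<longrightarrow> n \<in> {1,2} \<longrightarrow>
        field_symbols q (Q n x u) \<and> field_symbols q (A n DB (Q n x u) z))
   \<and> \<comment> \<open>decodability\<close>
     (\<forall>DB x u z. valid_db M d R DB \<longrightarrow> valid_vec R d x \<longrightarrow> u \<in> set_pmf PU \<longrightarrow>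
        z \<in> set_pmf PZ \<longrightarrow>
        dec x (Q 1 x u) (Q 2 x u) (A 1 DB (Q 1 x u) z) (A 2 DB (Q 2 x u) z) = closest x DB)
   \<and> \<comment> \<open>perfect user privacy: given DB, the law of (Q_n, A_n) does not depend on x\<close>
     (\<forall>DB n x x'. valid_db M d R DB \<longrightarrow> n \<in> {1,2} \<longrightarrow> valid_vec R d x \<longrightarrow> valid_vec R d x' \<longrightarrow>
        map_pmf (\<lambda>(u,z). (Q n x u, A n DB (Q n x u) z)) (pair_pmf PU PZ)
      = map_pmf (\<lambda>(u,z). (Q n x' u, A n DB (Q n x' u) z)) (pair_pmf PU PZ))"

definition PCR2_cost ::
  "(nat \<Rightarrow> nat list \<Rightarrow> nat list \<Rightarrow> nat list)
   \<Rightarrow> (nat \<Rightarrow> nat list list \<Rightarrow> nat list \<Rightarrow> nat list \<Rightarrow> nat list)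
   \<Rightarrow> nat list list \<Rightarrow> nat list \<Rightarrow> nat list \<Rightarrow> nat list \<Rightarrow> nat" where
  "PCR2_cost Q A DB x u z =
     length (Q 1 x u) + length (Q 2 x u) + length (A 1 DB (Q 1 x u) z) + length (A 2 DB (Q 2 x u) z)"

end

theory Submission
  imports Defs "HOL-Number_Theory.Cong"
begin

(* The user masks x with a uniformly random u in F_q^d: server 1 receives x + u and server 2
   receives u, and each of these is uniform on F_q^d whatever x is. For every y the answers
   ||y||^2 - 2<x + u, y> and 2<u, y> are linear in the query, and adding ||x||^2 to their sum
   gives ||x - y||^2 mod q. As 0 <= ||x - y||^2 <= R^2 d < q, this residue is the exact squared
   distance, so the user recovers all M distances and takes their argmin. *)

definition residue_vecs :: "nat \<Rightarrow> nat \<Rightarrow> nat list set" where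
  "residue_vecs q d = {u. set u \<subseteq> {..<q} \<and> length u = d}"

definition vec_add_mod :: "nat \<Rightarrow> nat list \<Rightarrow> nat list \<Rightarrow> nat list" where
  "vec_add_mod q x u = map2 (\<lambda>a b. (a + b) mod q) x u"

definition dot :: "nat list \<Rightarrow> nat list \<Rightarrow> int" where
  "dot x y = (\<Sum>j<length x. int (x ! j) * int (y ! j))"

definition index_of_min :: "'a::linorder list \<Rightarrow> nat" where
  "index_of_min xs = (LEAST i. i < length xs \<and> (\<forall>k<length xs. xs ! i \<le> xs ! k))"

lemma closest_eq_index_of_min: "closest x DB = index_of_min (map (sqdist x) DB)"
  by (simp add: closest_def index_of_min_def cong: conj_cong)

lemma finite_residue_vecs: "finite (residue_vecs q d)"
  unfolding residue_vecs_def by (rule finite_lists_length_eq) simp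

lemma residue_vecs_nonempty: "q > 0 \<Longrightarrow> residue_vecs q d \<noteq> {}"
  by (auto simp: residue_vecs_def intro!: exI[of _ "replicate d 0"])

lemma set_pmf_of_residue_vecs:
  "q > 0 \<Longrightarrow> set_pmf (pmf_of_set (residue_vecs q d)) = residue_vecs q d"
  by (simp add: finite_residue_vecs residue_vecs_nonempty)

lemma length_vec_add_mod [simp]: "length (vec_add_mod q x u) = min (length x) (length u)"
  by (simp add: vec_add_mod_def)

lemma nth_vec_add_mod [simp]:
  "j < length x \<Longrightarrow> j < length u \<Longrightarrow> vec_add_mod q x u ! j = (x ! j + u ! j) mod q"
  by (simp add: vec_add_mod_def)

lemma vec_add_mod_in_residue_vecs:
  "q > 0 \<Longrightarrow> length x = d \<Longrightarrow> u \<in> residue_vecs q d \<Longrightarrow> vec_add_mod q x u \<in> residue_vecs q d"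
  by (auto simp: residue_vecs_def vec_add_mod_def set_zip)

lemma inj_on_vec_add_mod: "inj_on (vec_add_mod q x) (residue_vecs q (length x))"
proof (rule inj_onI)
  fix u v assume u: "u \<in> residue_vecs q (length x)" and v: "v \<in> residue_vecs q (length x)"
    and eq: "vec_add_mod q x u = vec_add_mod q x v"
  show "u = v"
  proof (rule nth_equalityI)
    show "length u = length v" using u v by (simp add: residue_vecs_def)
  next
    fix j assume j: "j < length u"
    then have "[x ! j + u ! j = x ! j + v ! j] (mod q)"
      using arg_cong[OF eq, of "\<lambda>w. w ! j"] u v by (simp add: residue_vecs_def cong_def)
    moreover have "u ! j < q" "v ! j < q"
      using u v j by (auto simp: residue_vecs_def subset_iff)
    ultimately show "u ! j = v ! j"
      by (simp add: cong_add_lcancel_nat cong_less_modulus_unique_nat)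
  qed
qed

lemma bij_betw_vec_add_mod:
  assumes "q > 0" and "length x = d"
  shows "bij_betw (vec_add_mod q x) (residue_vecs q d) (residue_vecs q d)"
proof -
  have "vec_add_mod q x ` residue_vecs q d \<subseteq> residue_vecs q d"
    using vec_add_mod_in_residue_vecs assms by blast
  with inj_on_vec_add_mod[of q x] assms(2) show ?thesis
    by (simp add: bij_betw_def endo_inj_surj finite_residue_vecs)
qed

lemma map_pmf_vec_add_mod_uniform:
  assumes "q > 0" and "length x = d"
  shows "map_pmf (vec_add_mod q x) (pmf_of_set (residue_vecs q d)) = pmf_of_set (residue_vecs q d)"
  using map_pmf_of_set_bij_betw[OF bij_betw_vec_add_mod[OF assms]]
  by (simp add: assms(1) residue_vecs_nonempty finite_residue_vecs)

lemma dot_vec_add_mod_cong: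
  assumes "length u = length x"
  shows "[dot (vec_add_mod q x u) y = dot x y + dot u y] (mod int q)"
proof -
  have "[int ((x ! j + u ! j) mod q) * int (y ! j)
      = (int (x ! j) + int (u ! j)) * int (y ! j)] (mod int q)" for j
    by (rule cong_scalar_right) (simp add: cong_def of_nat_mod)
  then have "[dot (vec_add_mod q x u) y
      = (\<Sum>j<length x. (int (x ! j) + int (u ! j)) * int (y ! j))] (mod int q)"
    unfolding dot_def using assms by (auto intro: cong_sum)
  then show ?thesis
    using assms by (simp add: dot_def algebra_simps sum.distrib)
qed

lemma sqdist_eq_dot:
  assumes "length y = length x"
  shows "sqdist x y = dot x x - 2 * dot x y + dot y y"
proof -
  have "sqdist x y = (\<Sum>j<length x. int (x ! j) * int (x ! j) - 2 * (int (x ! j) * int (y ! j))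
      + int (y ! j) * int (y ! j))"
    unfolding sqdist_def by (rule sum.cong) (simp_all add: power2_eq_square algebra_simps)
  also have "\<dots> = dot x x - 2 * dot x y + dot y y"
    using assms by (simp add: dot_def sum.distrib sum_subtractf sum_distrib_left)
  finally show ?thesis .
qed

lemma sqdist_le:
  assumes "valid_vec R d x" and "valid_vec R d y"
  shows "sqdist x y \<le> int (R^2 * d)"
proof -
  have term_le: "(int (x ! j) - int (y ! j))^2 \<le> int R ^ 2" if "j < d" for j
  proof -
    have "x ! j \<le> R" "y ! j \<le> R"
      using assms that by (auto simp: valid_vec_def dest!: nth_mem)
    then have "\<bar>int (x ! j) - int (y ! j)\<bar> \<le> int R" by linarith
    then show ?thesis by (metis abs_ge_zero power2_abs power_mono)
  qed
  have "length x = d" using assms(1) by (simp add: valid_vec_def)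
  have "sqdist x y \<le> (\<Sum>j<d. int R ^ 2)"
    unfolding sqdist_def \<open>length x = d\<close> by (intro sum_mono) (simp add: term_le)
  then show ?thesis by (simp add: mult.commute)
qed

lemma sqdist_nonneg: "0 \<le> sqdist x y"
  by (simp add: sqdist_def sum_nonneg)

lemma masked_answers_sum_cong:
  assumes "length u = length x" and "length y = length x"
  shows "[(dot y y - 2 * dot (vec_add_mod q x u) y) + 2 * dot u y + dot x x = sqdist x y] (mod int q)"
proof -
  have "[dot y y - 2 * dot (vec_add_mod q x u) y = dot y y - 2 * (dot x y + dot u y)] (mod int q)"
    by (intro cong_diff cong_refl cong_scalar_left dot_vec_add_mod_cong assms(1))
  then have "[(dot y y - 2 * dot (vec_add_mod q x u) y) + 2 * dot u y + dot x x
      = (dot y y - 2 * (dot x y + dot u y)) + 2 * dot u y + dot x x] (mod int q)"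
    by (intro cong_add cong_refl)
  also have "(dot y y - 2 * (dot x y + dot u y)) + 2 * dot u y + dot x x = sqdist x y"
    using sqdist_eq_dot[OF assms(2)] by (simp add: algebra_simps)
  finally show ?thesis .
qed

definition pcr_query :: "nat \<Rightarrow> nat \<Rightarrow> nat list \<Rightarrow> nat list \<Rightarrow> nat list" where
  "pcr_query q n x u = (if n = 1 then vec_add_mod q x u else u)"

definition pcr_answer :: "nat \<Rightarrow> nat \<Rightarrow> nat list list \<Rightarrow> nat list \<Rightarrow> nat list" where
  "pcr_answer q n DB p =
     map (\<lambda>y. nat ((if n = 1 then dot y y - 2 * dot p y else 2 * dot p y) mod int q)) DB"

definition pcr_decode :: "nat \<Rightarrow> nat list \<Rightarrow> nat list \<Rightarrow> nat list \<Rightarrow> nat" where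
  "pcr_decode q x a\<^sub>1 a\<^sub>2 = index_of_min (map2 (\<lambda>a b. (int a + int b + dot x x) mod int q) a\<^sub>1 a\<^sub>2)"

lemma length_pcr_query [simp]: "length u = length x \<Longrightarrow> length (pcr_query q n x u) = length x"
  by (simp add: pcr_query_def)

lemma length_pcr_answer [simp]: "length (pcr_answer q n DB p) = length DB"
  by (simp add: pcr_answer_def)

lemma pcr_query_in_residue_vecs:
  "q > 0 \<Longrightarrow> length x = d \<Longrightarrow> u \<in> residue_vecs q d \<Longrightarrow> pcr_query q n x u \<in> residue_vecs q d"
  by (simp add: pcr_query_def vec_add_mod_in_residue_vecs)

lemma field_symbols_pcr_answer: "q > 0 \<Longrightarrow> field_symbols q (pcr_answer q n DB p)"
  by (auto simp: field_symbols_def pcr_answer_def nat_less_iff)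

lemma PCR2_cost_pcr:
  assumes "length x = d" and "length u = d"
  shows "PCR2_cost (pcr_query q) (\<lambda>n DB p z. pcr_answer q n DB p) DB x u z = 2 * (d + length DB)"
  using assms by (simp add: PCR2_cost_def)

lemma pcr_decode_eq_closest:
  assumes "q > 0" and "length u = length x"
    and DB: "\<And>y. y \<in> set DB \<Longrightarrow> length y = length x \<and> sqdist x y < int q"
  shows "pcr_decode q x (pcr_answer q 1 DB (pcr_query q 1 x u)) (pcr_answer q 2 DB (pcr_query q 2 x u))
    = closest x DB"
proof -
  have "(int (nat ((dot y y - 2 * dot (vec_add_mod q x u) y) mod int q))
      + int (nat ((2 * dot u y) mod int q)) + dot x x) mod int q = sqdist x y"
    (is "(?a\<^sub>1 + ?a\<^sub>2 + _) mod _ = _") if "y \<in> set DB" for y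
  proof -
    have "[?a\<^sub>1 + ?a\<^sub>2 + dot x x
        = (dot y y - 2 * dot (vec_add_mod q x u) y) + 2 * dot u y + dot x x] (mod int q)"
      using \<open>q > 0\<close> by (intro cong_add cong_refl) simp_all
    then have "[?a\<^sub>1 + ?a\<^sub>2 + dot x x = sqdist x y] (mod int q)"
      using DB[OF that] by (blast intro: cong_trans masked_answers_sum_cong[OF assms(2)])
    moreover have "0 \<le> sqdist x y" "sqdist x y < int q"
      using DB[OF that] by (simp_all add: sqdist_nonneg)
    ultimately show ?thesis by (simp add: cong_def)
  qed
  then show ?thesis
    by (simp add: pcr_decode_def pcr_answer_def pcr_query_def zip_map_map zip_same_conv_map
        closest_eq_index_of_min cong: map_cong)
qed

lemma pcr_view_independent_of_input:
  assumes "q > 0" and "length x = d"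
  shows "map_pmf (\<lambda>(u, z). (pcr_query q n x u, pcr_answer q n DB (pcr_query q n x u)))
      (pair_pmf (pmf_of_set (residue_vecs q d)) (return_pmf z\<^sub>0))
    = map_pmf (\<lambda>p. (p, pcr_answer q n DB p)) (pmf_of_set (residue_vecs q d))"
proof -
  have "pcr_query q n x = (if n = 1 then vec_add_mod q x else id)"
    by (simp add: fun_eq_iff pcr_query_def)
  then have uniform:
      "map_pmf (pcr_query q n x) (pmf_of_set (residue_vecs q d)) = pmf_of_set (residue_vecs q d)"
    using map_pmf_vec_add_mod_uniform[OF assms] by simp
  have "map_pmf (\<lambda>(u, z). (pcr_query q n x u, pcr_answer q n DB (pcr_query q n x u)))
      (pair_pmf (pmf_of_set (residue_vecs q d)) (return_pmf z\<^sub>0))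
    = map_pmf (\<lambda>p. (p, pcr_answer q n DB p))
        (map_pmf (pcr_query q n x) (pmf_of_set (residue_vecs q d)))"
    by (simp add: pair_return_pmf2 map_pmf_comp)
  then show ?thesis
    unfolding uniform .
qed

lemma PCR2_scheme_pcr:
  assumes "q > 0" and "R^2 * d < q"
  shows "PCR2_scheme q M d R (pmf_of_set (residue_vecs q d)) (return_pmf [])
    (pcr_query q) (\<lambda>n DB p z. pcr_answer q n DB p) (\<lambda>x q\<^sub>1 q\<^sub>2. pcr_decode q x)"
proof -
  note set_U = set_pmf_of_residue_vecs[OF \<open>q > 0\<close>, of d]
  have view_law: "map_pmf (\<lambda>(u, z). (pcr_query q n x u, pcr_answer q n DB (pcr_query q n x u)))
      (pair_pmf (pmf_of_set (residue_vecs q d)) (return_pmf []))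
    = map_pmf (\<lambda>p. (p, pcr_answer q n DB p)) (pmf_of_set (residue_vecs q d))"
    if "valid_vec R d x" for n x DB
    using that by (intro pcr_view_independent_of_input \<open>q > 0\<close>) (simp add: valid_vec_def)
  show ?thesis
    unfolding PCR2_scheme_def
  proof (intro conjI allI impI)
    fix DB x u and n :: nat
    assume x: "valid_vec R d x" and u: "u \<in> set_pmf (pmf_of_set (residue_vecs q d))"
    have "pcr_query q n x u \<in> residue_vecs q d"
      using x u[unfolded set_U]
      by (intro pcr_query_in_residue_vecs \<open>q > 0\<close>) (simp_all add: valid_vec_def)
    then show "field_symbols q (pcr_query q n x u)"
      by (auto simp: residue_vecs_def field_symbols_def)
  next
    fix DB x u and n :: nat
    show "field_symbols q (pcr_answer q n DB (pcr_query q n x u))"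
      using field_symbols_pcr_answer[OF \<open>q > 0\<close>] .
  next
    fix DB x u
    assume DB: "valid_db M d R DB" and x: "valid_vec R d x"
      and u: "u \<in> set_pmf (pmf_of_set (residue_vecs q d))"
    have "length u = length x"
      using x u[unfolded set_U] by (simp add: residue_vecs_def valid_vec_def)
    moreover have "length y = length x \<and> sqdist x y < int q" if "y \<in> set DB" for y
    proof -
      have y: "valid_vec R d y"
        using DB that by (simp add: valid_db_def)
      have "sqdist x y \<le> int (R^2 * d)"
        using sqdist_le[OF x y] .
      also have "\<dots> < int q"
        using assms(2) by (simp only: of_nat_less_iff)
      finally show ?thesis
        using x y by (simp add: valid_vec_def)
    qed
    ultimately show "pcr_decode q x (pcr_answer q 1 DB (pcr_query q 1 x u))
        (pcr_answer q 2 DB (pcr_query q 2 x u)) = closest x DB"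
      using pcr_decode_eq_closest[OF \<open>q > 0\<close>] by blast
  next
    fix DB x x' and n :: nat
    assume "valid_vec R d x" and "valid_vec R d x'"
    then show "map_pmf (\<lambda>(u, z). (pcr_query q n x u, pcr_answer q n DB (pcr_query q n x u)))
        (pair_pmf (pmf_of_set (residue_vecs q d)) (return_pmf []))
      = map_pmf (\<lambda>(u, z). (pcr_query q n x' u, pcr_answer q n DB (pcr_query q n x' u)))
        (pair_pmf (pmf_of_set (residue_vecs q d)) (return_pmf []))"
      by (simp only: view_law)
  qed
qed

theorem theorem1:
  fixes M d R q :: nat
  assumes "prime q" and "q > R^2 * d" and "M \<ge> 1"
  shows "\<exists>PU PZ Q A dec. PCR2_scheme q M d R PU PZ Q A dec \<and>
           (\<forall>DB x u z. valid_db M d R DB \<longrightarrow> valid_vec R d x \<longrightarrow> u \<in> set_pmf PU \<longrightarrow>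
              z \<in> set_pmf PZ \<longrightarrow> PCR2_cost Q A DB x u z = 2 * (d + M))"
proof -
  have "q > 0"
    using assms(1) by (simp add: prime_gt_0_nat)
  let ?U = "pmf_of_set (residue_vecs q d)"
  show ?thesis
  proof (intro exI conjI allI impI)
    show "PCR2_scheme q M d R ?U (return_pmf []) (pcr_query q)
        (\<lambda>n DB p z. pcr_answer q n DB p) (\<lambda>x q\<^sub>1 q\<^sub>2. pcr_decode q x)"
      using \<open>q > 0\<close> assms(2) by (rule PCR2_scheme_pcr)
    fix DB x u z
    assume "valid_db M d R DB" and "valid_vec R d x" and "u \<in> set_pmf ?U"
    then show "PCR2_cost (pcr_query q) (\<lambda>n DB p z. pcr_answer q n DB p) DB x u z = 2 * (d + M)"
      using set_pmf_of_residue_vecs[OF \<open>q > 0\<close>]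
      by (auto simp: PCR2_cost_pcr valid_db_def valid_vec_def residue_vecs_def)
  qed
qed

end
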